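(* Let $\Gamma$ be a distance-regular graph with diameter $D\ge3$ which is neither bipartite nor almost bipartite. Let $\sigma_0,\dots,\sigma_D$ and $\rho_0,\dots,\rho_D$ be nontrivial pseudo cosine sequences forming a tight pair, and assume $\varepsilon=1$ is an auxiliary parameter for this pair. Then: (i) $\rho_i=(-1)^i$ for $0\le i\le D-1$ and $\rho_D\ne(-1)^D$; (ii) $\sigma_{D-1}=\sigma_D$; (iii) $a_i=0$ for $0\le i\le D-2$ and $a_{D-1}\ne0$.
   Context: $\Gamma$ is a finite connected undirected graph without loops or multiple edges, distance-regular with diameter $D$, intersection numbers $a_i,b_i,c_i$ ($c_0=0$, $b_D=0$), valency $k$, $c_i+a_i+b_i=k$. Bipartite: $a_i=0$ for all $0\le i\le D$; almost bipartite: $a_D\ne0$, $a_i=0$ for $0\le i\le D-1$. For $\theta\in\mathbb{R}$ the pseudo cosine sequence for $\theta$ is the sequence of reals $\sigma_0,\dots,\sigma_D$ with $\sigma_0=1$ and $c_i\sigma_{i-1}+a_i\sigma_i+b_i\sigma_{i+1}=\theta\sigma_i$ for $0\le i\le D-1$; nontrivial means $\sigma_1\ne1$. Pseudo cosine sequences $\sigma_i$, $\rho_i$ form a tight pair if $(\sigma_i\rho_i)_{i=0}^D$ is a pseudo cosine sequence. For a tight pair of nontrivial pseudo cosine sequences, an auxiliary parameter is a real $\varepsilon$ with $\sigma_i\rho_i-\sigma_{i-1}\rho_{i-1}=\varepsilon(\sigma_{i-1}\rho_i-\sigma_i\rho_{i-1})$ for $1\le i\le D$. *)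

theory Defs
  imports Complex_Main
begin

definition is_path :: "'v set \<Rightarrow> ('v \<Rightarrow> 'v \<Rightarrow> bool) \<Rightarrow> 'v \<Rightarrow> 'v \<Rightarrow> nat \<Rightarrow> bool" where
  "is_path V E x y n \<longleftrightarrow> (\<exists>p. length p = Suc n \<and> hd p = x \<and> last p = y \<and> set p \<subseteq> V
      \<and> (\<forall>i<n. E (p ! i) (p ! Suc i)))"

definition gdist :: "'v set \<Rightarrow> ('v \<Rightarrow> 'v \<Rightarrow> bool) \<Rightarrow> 'v \<Rightarrow> 'v \<Rightarrow> nat" where
  "gdist V E x y = (LEAST n. is_path V E x y n)"

definition simple_graph :: "'v set \<Rightarrow> ('v \<Rightarrow> 'v \<Rightarrow> bool) \<Rightarrow> bool" where
  "simple_graph V E \<longleftrightarrow> finite V \<and> V \<noteq> {}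
     \<and> (\<forall>x y. E x y \<longrightarrow> x \<in> V \<and> y \<in> V)
     \<and> (\<forall>x y. E x y \<longrightarrow> E y x) \<and> (\<forall>x. \<not> E x x)"

definition connected_graph :: "'v set \<Rightarrow> ('v \<Rightarrow> 'v \<Rightarrow> bool) \<Rightarrow> bool" where
  "connected_graph V E \<longleftrightarrow> (\<forall>x\<in>V. \<forall>y\<in>V. \<exists>n. is_path V E x y n)"

text \<open>Diameter D and intersection numbers a, b, c: for all vertices x, y at distance i
  (0 \<le> i \<le> D), y has exactly c i neighbours at distance i-1 from x (for i \<ge> 1),
  a i neighbours at distance i and b i neighbours at distance i+1; c 0 = 0.
  (b D = 0 then holds automatically.)\<close>
definition distance_regular ::
  "'v set \<Rightarrow> ('v \<Rightarrow> 'v \<Rightarrow> bool) \<Rightarrow> nat \<Rightarrow> (nat \<Rightarrow> nat) \<Rightarrow> (nat \<Rightarrow> nat) \<Rightarrow> (nat \<Rightarrow> nat) \<Rightarrow> bool" where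
  "distance_regular V E D a b c \<longleftrightarrow>
     simple_graph V E \<and> connected_graph V E
     \<and> D = Max {gdist V E x y | x y. x \<in> V \<and> y \<in> V}
     \<and> c 0 = 0
     \<and> (\<forall>i\<le>D. \<forall>x\<in>V. \<forall>y\<in>V. gdist V E x y = i \<longrightarrow>
          (1 \<le> i \<longrightarrow> card {z\<in>V. E y z \<and> gdist V E x z = i - 1} = c i)
        \<and> card {z\<in>V. E y z \<and> gdist V E x z = i} = a i
        \<and> card {z\<in>V. E y z \<and> gdist V E x z = i + 1} = b i)"

definition bipartite_drg :: "nat \<Rightarrow> (nat \<Rightarrow> nat) \<Rightarrow> bool" where
  "bipartite_drg D a \<longleftrightarrow> (\<forall>i\<le>D. a i = 0)"

definition almost_bipartite_drg :: "nat \<Rightarrow> (nat \<Rightarrow> nat) \<Rightarrow> bool" where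
  "almost_bipartite_drg D a \<longleftrightarrow> a D \<noteq> 0 \<and> (\<forall>i<D. a i = 0)"

text \<open>Pseudo cosine sequence for \<theta>; only the values \<sigma> 0 .. \<sigma> D are relevant.
  At i = 0 the term c 0 * \<sigma>(0-1) vanishes since c 0 = 0.\<close>
definition pseudo_cosine ::
  "nat \<Rightarrow> (nat \<Rightarrow> nat) \<Rightarrow> (nat \<Rightarrow> nat) \<Rightarrow> (nat \<Rightarrow> nat) \<Rightarrow> real \<Rightarrow> (nat \<Rightarrow> real) \<Rightarrow> bool" where
  "pseudo_cosine D a b c \<theta> \<sigma> \<longleftrightarrow> \<sigma> 0 = 1 \<and>
     (\<forall>i<D. real (c i) * \<sigma> (i - 1) + real (a i) * \<sigma> i + real (b i) * \<sigma> (Suc i) = \<theta> * \<sigma> i)"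

definition is_pseudo_cosine ::
  "nat \<Rightarrow> (nat \<Rightarrow> nat) \<Rightarrow> (nat \<Rightarrow> nat) \<Rightarrow> (nat \<Rightarrow> nat) \<Rightarrow> (nat \<Rightarrow> real) \<Rightarrow> bool" where
  "is_pseudo_cosine D a b c \<sigma> \<longleftrightarrow> (\<exists>\<theta>. pseudo_cosine D a b c \<theta> \<sigma>)"

definition nontrivial_pc :: "(nat \<Rightarrow> real) \<Rightarrow> bool" where
  "nontrivial_pc \<sigma> \<longleftrightarrow> \<sigma> 1 \<noteq> 1"

definition tight_pair ::
  "nat \<Rightarrow> (nat \<Rightarrow> nat) \<Rightarrow> (nat \<Rightarrow> nat) \<Rightarrow> (nat \<Rightarrow> nat) \<Rightarrow> (nat \<Rightarrow> real) \<Rightarrow> (nat \<Rightarrow> real) \<Rightarrow> bool" where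
  "tight_pair D a b c \<sigma> \<rho> \<longleftrightarrow> is_pseudo_cosine D a b c \<sigma> \<and> is_pseudo_cosine D a b c \<rho>
     \<and> is_pseudo_cosine D a b c (\<lambda>i. \<sigma> i * \<rho> i)"

definition auxiliary_parameter :: "nat \<Rightarrow> (nat \<Rightarrow> real) \<Rightarrow> (nat \<Rightarrow> real) \<Rightarrow> real \<Rightarrow> bool" where
  "auxiliary_parameter D \<sigma> \<rho> \<epsilon> \<longleftrightarrow>
     (\<forall>i. 1 \<le> i \<and> i \<le> D \<longrightarrow>
        \<sigma> i * \<rho> i - \<sigma> (i - 1) * \<rho> (i - 1) = \<epsilon> * (\<sigma> (i - 1) * \<rho> i - \<sigma> i * \<rho> (i - 1)))"

end

theory Submission
  imports Defs
begin

(*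
  With \<epsilon> = 1 the defining relation of an auxiliary parameter factors as
  (\<sigma> i - \<sigma> (i-1)) (\<rho> i + \<rho> (i-1)) = 0.  As \<sigma> 1 \<noteq> 1 this forces \<rho> 1 = -1, so \<rho> belongs
  to the eigenvalue -k, for which the recurrence reads
    c i (\<rho> (i-1) + \<rho> i) + 2 a i \<rho> i + b i (\<rho> (i+1) + \<rho> i) = 0.
  Hence \<rho> alternates in sign up to the first index m with a m \<noteq> 0 and stops alternating
  there, which forces \<sigma> (m+1) = \<sigma> m.  If m + 1 < D, the factorisation at m + 2 leaves two
  cases.  Either \<sigma> is constant on m, m+1, m+2; then the recurrence at m + 1 and \<sigma> 1 \<noteq> 1
  give \<sigma> (m+1) = 0, and two consecutive zeros propagate down to \<sigma> 0 = 0.  Or \<rho> alternates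
  again from m + 1; then the recurrences at m and m + 1 make \<rho> m + \<rho> (m+1) a nonpositive
  multiple of both \<rho> m and \<rho> (m+1), so it vanishes, contradicting the break at m.
  Therefore m = D - 1.
*)

section \<open>Paths and distances\<close>

lemma is_path_refl: "x \<in> V \<Longrightarrow> is_path V E x x 0"
  unfolding is_path_def by (intro exI[of _ "[x]"]) auto

lemma is_path_0_imp_eq: "is_path V E x y 0 \<Longrightarrow> x = y"
  unfolding is_path_def by (auto simp: length_Suc_conv)

lemma is_path_snoc:
  assumes "is_path V E x y n" "E y z" "z \<in> V"
  shows "is_path V E x z (Suc n)"
proof -
  obtain p where p: "length p = Suc n" "hd p = x" "last p = y" "set p \<subseteq> V"
      "\<forall>i<n. E (p ! i) (p ! Suc i)"
    using assms(1) unfolding is_path_def by blast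
  have "p \<noteq> []" "p ! n = y" using p(1,3) last_conv_nth[of p] by force+
  moreover have "\<forall>i<Suc n. E ((p @ [z]) ! i) ((p @ [z]) ! Suc i)"
    using calculation p(1,5) assms(2) by (auto simp: nth_append less_Suc_eq)
  ultimately show ?thesis using p assms(3)
    unfolding is_path_def by (intro exI[of _ "p @ [z]"]) auto
qed

lemma is_path_SucE:
  assumes "is_path V E x y (Suc n)"
  obtains z where "is_path V E x z n" "E z y"
proof -
  obtain p where p: "length p = Suc (Suc n)" "hd p = x" "last p = y" "set p \<subseteq> V"
      "\<forall>i<Suc n. E (p ! i) (p ! Suc i)"
    using assms unfolding is_path_def by blast
  have "last (take (Suc n) p) = p ! n"
    using p(1) last_conv_nth[of "take (Suc n) p"] by force
  then have "is_path V E x (p ! n) n"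
    using p set_take_subset[of "Suc n" p] unfolding is_path_def
    by (intro exI[of _ "take (Suc n) p"]) auto
  moreover have "E (p ! n) y"
    using p(1,3,5) last_conv_nth[of p] by force
  ultimately show thesis by (rule that)
qed

lemma gdist_le: "is_path V E x y n \<Longrightarrow> gdist V E x y \<le> n"
  unfolding gdist_def by (rule Least_le)

locale connected_simple_graph =
  fixes V :: "'v set" and E :: "'v \<Rightarrow> 'v \<Rightarrow> bool"
  assumes simple: "simple_graph V E" and connected: "connected_graph V E"
begin

lemma
  shows finite_vertices: "finite V"
    and vertices_nonempty: "V \<noteq> {}"
    and edge_vertices: "E x y \<Longrightarrow> x \<in> V \<and> y \<in> V"
    and edge_sym: "E x y \<Longrightarrow> E y x"
    and edge_irrefl: "\<not> E x x"
  using simple unfolding simple_graph_def by blast+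

lemma gdist_is_path: "x \<in> V \<Longrightarrow> y \<in> V \<Longrightarrow> is_path V E x y (gdist V E x y)"
  using connected unfolding gdist_def connected_graph_def by (meson LeastI_ex)

lemma gdist_eq_0_iff: "x \<in> V \<Longrightarrow> y \<in> V \<Longrightarrow> gdist V E x y = 0 \<longleftrightarrow> x = y"
  using gdist_is_path is_path_0_imp_eq gdist_le is_path_refl by (metis le_zero_eq)

lemma gdist_edge_le: "x \<in> V \<Longrightarrow> E y z \<Longrightarrow> gdist V E x z \<le> Suc (gdist V E x y)"
  using gdist_le is_path_snoc gdist_is_path edge_vertices by metis

lemma gdist_edge_eq_1:
  assumes "E x z"
  shows "gdist V E x z = 1"
proof -
  have "x \<in> V" "z \<in> V" "x \<noteq> z" using assms edge_vertices edge_irrefl by auto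
  then show ?thesis
    using gdist_edge_le[of x x z] assms gdist_eq_0_iff[of x x] gdist_eq_0_iff[of x z] by fastforce
qed

lemma gdist_SucE:
  assumes "x \<in> V" "y \<in> V" "gdist V E x y = Suc n"
  obtains z where "z \<in> V" "E z y" "gdist V E x z = n"
proof -
  obtain z where path: "is_path V E x z n" and zy: "E z y"
    using gdist_is_path[OF assms(1,2)] assms(3) is_path_SucE by metis
  have "gdist V E x z = n"
    using gdist_le[OF path] gdist_edge_le[OF assms(1) zy] assms(3) by simp
  with zy edge_vertices that show thesis by blast
qed

lemma gdist_intermediate:
  assumes "x \<in> V" "y \<in> V" "j \<le> gdist V E x y"
  shows "\<exists>z\<in>V. gdist V E x z = j"
proof -
  have "y \<in> V \<Longrightarrow> gdist V E x y = n \<Longrightarrow> j \<le> n \<Longrightarrow> \<exists>z\<in>V. gdist V E x z = j" for n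
  proof (induction n arbitrary: y)
    case (Suc n)
    then show ?case
      using gdist_SucE[OF assms(1)] le_Suc_eq by metis
  qed auto
  with assms show ?thesis by blast
qed

end

section \<open>Distance-regular graphs\<close>

locale intersection_numbers =
  fixes D :: nat and a b c :: "nat \<Rightarrow> nat"
  assumes c_0: "c 0 = 0" and a_0: "a 0 = 0"
    and row_sum: "i \<le> D \<Longrightarrow> c i + a i + b i = b 0"
    and c_pos: "1 \<le> i \<Longrightarrow> i \<le> D \<Longrightarrow> 0 < c i"
    and b_pos: "i < D \<Longrightarrow> 0 < b i"

locale distance_regular_graph =
  fixes V :: "'v set" and E :: "'v \<Rightarrow> 'v \<Rightarrow> bool"
    and D :: nat and a b c :: "nat \<Rightarrow> nat"
  assumes distance_regular: "distance_regular V E D a b c"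
begin

sublocale connected_simple_graph V E
  using distance_regular unfolding distance_regular_def by unfold_locales blast+

lemma diameter_eq_Max: "D = Max {gdist V E x y | x y. x \<in> V \<and> y \<in> V}"
  and intersection_c_0: "c 0 = 0"
  using distance_regular unfolding distance_regular_def by blast+

lemma card_neighbours_at_distance:
  assumes "i \<le> D" "x \<in> V" "y \<in> V" "gdist V E x y = i"
  shows "1 \<le> i \<Longrightarrow> card {z\<in>V. E y z \<and> gdist V E x z = i - 1} = c i"
    and "card {z\<in>V. E y z \<and> gdist V E x z = i} = a i"
    and "card {z\<in>V. E y z \<and> gdist V E x z = i + 1} = b i"
  using distance_regular assms unfolding distance_regular_def by blast+

lemma distance_attained:
  assumes "i \<le> D"
  obtains x y where "x \<in> V" "y \<in> V" "gdist V E x y = i"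
proof -
  have "{gdist V E x y | x y. x \<in> V \<and> y \<in> V} = (\<lambda>(x, y). gdist V E x y) ` (V \<times> V)"
    by auto
  then have "D \<in> {gdist V E x y | x y. x \<in> V \<and> y \<in> V}"
    unfolding diameter_eq_Max using finite_vertices vertices_nonempty by (intro Max_in) auto
  then obtain x y where "x \<in> V" "y \<in> V" "gdist V E x y = D" by blast
  then show thesis using gdist_intermediate assms that by metis
qed

lemma intersection_a_0: "a 0 = 0"
proof -
  obtain x where x: "x \<in> V" using vertices_nonempty by blast
  then have "card {z\<in>V. E x z \<and> gdist V E x z = 0} = a 0"
    using card_neighbours_at_distance(2)[of 0 x x] gdist_eq_0_iff by simp
  moreover have "{z\<in>V. E x z \<and> gdist V E x z = 0} = {}"
    using gdist_eq_0_iff[OF x] edge_irrefl by auto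
  ultimately show ?thesis by simp
qed

lemma valency:
  assumes "y \<in> V"
  shows "card {z\<in>V. E y z} = b 0"
proof -
  have "{z\<in>V. E y z \<and> gdist V E y z = 0 + 1} = {z\<in>V. E y z}"
    using gdist_edge_eq_1 by auto
  then show ?thesis
    using card_neighbours_at_distance(3)[of 0 y y] assms gdist_eq_0_iff by simp
qed

lemma intersection_row_sum:
  assumes "i \<le> D"
  shows "c i + a i + b i = b 0"
proof (cases "i = 0")
  case True
  then show ?thesis using intersection_c_0 intersection_a_0 by simp
next
  case False
  obtain x y where xy: "x \<in> V" "y \<in> V" "gdist V E x y = i"
    using distance_attained[OF assms] by blast
  define level where "level d = {z\<in>V. E y z \<and> gdist V E x z = d}" for d
  have "gdist V E x z \<in> {i - 1, i, i + 1}" if "E y z" for z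
    using gdist_edge_le[OF xy(1) that] gdist_edge_le[OF xy(1) edge_sym[OF that]] xy(3) by auto
  then have "{z\<in>V. E y z} = level (i - 1) \<union> level i \<union> level (i + 1)"
    unfolding level_def by auto
  moreover have "finite (level d)" for d
    using finite_vertices unfolding level_def by simp
  moreover have "level (i - 1) \<inter> level i = {}" "(level (i - 1) \<union> level i) \<inter> level (i + 1) = {}"
    using False unfolding level_def by auto
  ultimately have "card {z\<in>V. E y z} = card (level (i - 1)) + card (level i) + card (level (i + 1))"
    by (simp add: card_Un_disjoint)
  then show ?thesis
    using valency[OF xy(2)] card_neighbours_at_distance[OF assms xy] False
    unfolding level_def by simp
qed

lemma card_neighbours_pos:
  assumes "z \<in> V" "E y z" "gdist V E x z = d"
  shows "0 < card {z\<in>V. E y z \<and> gdist V E x z = d}"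
  using assms finite_vertices by (subst card_gt_0_iff) auto

lemma intersection_c_pos:
  assumes "1 \<le> i" "i \<le> D"
  shows "0 < c i"
proof -
  obtain x y where xy: "x \<in> V" "y \<in> V" "gdist V E x y = i"
    using distance_attained[OF assms(2)] by blast
  moreover obtain z where "z \<in> V" "E z y" "gdist V E x z = i - 1"
    using gdist_SucE[OF xy(1,2), of "i - 1"] xy(3) assms(1) by auto
  ultimately show ?thesis
    using card_neighbours_pos[of z y x "i - 1"] card_neighbours_at_distance(1)[OF assms(2) xy assms(1)]
      edge_sym by simp
qed

lemma intersection_b_pos:
  assumes "i < D"
  shows "0 < b i"
proof -
  obtain x w where xw: "x \<in> V" "w \<in> V" "gdist V E x w = Suc i"
    using distance_attained[of "Suc i"] assms by (metis Suc_leI)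
  moreover obtain y where "y \<in> V" "E y w" "gdist V E x y = i"
    using gdist_SucE[OF xw] by blast
  ultimately show ?thesis
    using card_neighbours_pos[of w y x "i + 1"] card_neighbours_at_distance(3)[of i x y] assms
    by simp
qed

sublocale intersection_numbers D a b c
  by unfold_locales (fact intersection_c_0 intersection_a_0 intersection_row_sum
    intersection_c_pos intersection_b_pos)+

end

section \<open>Pseudo cosine sequences\<close>

lemma add_eq_0_if_nonpos_multiples:
  fixes x y s t :: real
  assumes "x + y = s * x" "x + y = t * y" "s \<le> 0" "t \<le> 0"
  shows "x + y = 0"
proof -
  have "(x + y) * (x + y) = (x + y) * x + (x + y) * y"
    by (simp add: distrib_left)
  also have "\<dots> = s * (x * x) + t * (y * y)"
    using assms(1,2) by (metis mult.assoc mult.commute)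
  also have "\<dots> \<le> 0"
    using assms(3,4) by (simp add: add_nonpos_nonpos mult_nonpos_nonneg)
  finally show ?thesis by (auto simp: mult_le_0_iff)
qed

context intersection_numbers
begin

context
  fixes \<theta> :: real and \<sigma> :: "nat \<Rightarrow> real"
  assumes \<sigma>: "pseudo_cosine D a b c \<theta> \<sigma>"
begin

lemma pseudo_cosine_0: "\<sigma> 0 = 1"
  using \<sigma> unfolding pseudo_cosine_def by blast

lemma pseudo_cosine_rec:
  "i < D \<Longrightarrow> c i * \<sigma> (i - 1) + a i * \<sigma> i + b i * \<sigma> (Suc i) = \<theta> * \<sigma> i"
  using \<sigma> unfolding pseudo_cosine_def by blast

lemma pseudo_cosine_eigenvalue: "0 < D \<Longrightarrow> \<theta> = b 0 * \<sigma> 1"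
  using pseudo_cosine_rec[of 0] pseudo_cosine_0 c_0 a_0 by simp

lemma pseudo_cosine_no_consecutive_zeros:
  assumes "n < D" "\<sigma> n = 0"
  shows "\<sigma> (Suc n) \<noteq> 0"
  using assms
proof (induction n)
  case 0
  then show ?case using pseudo_cosine_0 by simp
next
  case (Suc n)
  show ?case
  proof
    assume "\<sigma> (Suc (Suc n)) = 0"
    then have "c (Suc n) * \<sigma> n = 0"
      using pseudo_cosine_rec[of "Suc n"] Suc.prems by simp
    then have "\<sigma> n = 0" using c_pos[of "Suc n"] Suc.prems by simp
    with Suc show False by simp
  qed
qed

lemma pseudo_cosine_not_flat:
  assumes "\<sigma> 1 \<noteq> 1" and i: "1 \<le> i" "i < D" and "\<sigma> (i - 1) = \<sigma> i"
  shows "\<sigma> (Suc i) \<noteq> \<sigma> i"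
proof
  assume "\<sigma> (Suc i) = \<sigma> i"
  then have "real (c i + a i + b i) * \<sigma> i = \<theta> * \<sigma> i"
    using pseudo_cosine_rec[of i] i assms(4) by (simp add: algebra_simps)
  then have "b 0 * \<sigma> i = b 0 * \<sigma> 1 * \<sigma> i"
    using row_sum[of i] pseudo_cosine_eigenvalue i by simp
  then have "b 0 * (1 - \<sigma> 1) * \<sigma> i = 0" by (simp add: algebra_simps)
  then have "\<sigma> i = 0" using b_pos[of 0] i assms(1) by simp
  then show False
    using pseudo_cosine_no_consecutive_zeros[of "i - 1"] assms(4) i by (simp add: less_imp_diff_less)
qed

end

context
  fixes \<rho> :: "nat \<Rightarrow> real"
  assumes \<rho>: "pseudo_cosine D a b c (- b 0) \<rho>"
begin

lemma pseudo_cosine_minus_valency: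
  assumes "j < D"
  shows "c j * (\<rho> (j - 1) + \<rho> j) + 2 * real (a j) * \<rho> j + b j * (\<rho> (Suc j) + \<rho> j) = 0"
proof -
  have "c j * (\<rho> (j - 1) + \<rho> j) + 2 * real (a j) * \<rho> j + b j * (\<rho> (Suc j) + \<rho> j)
      = (c j * \<rho> (j - 1) + a j * \<rho> j + b j * \<rho> (Suc j)) + real (c j + a j + b j) * \<rho> j"
    by (simp add: algebra_simps)
  also have "\<dots> = 0"
    using pseudo_cosine_rec[OF \<rho> assms] row_sum[of j] assms by simp
  finally show ?thesis .
qed

lemma pseudo_cosine_alternating:
  assumes "m \<le> D" "\<forall>j<m. a j = 0" "i \<le> m"
  shows "\<rho> i = (-1) ^ i"
  using assms(3)
proof (induction i rule: less_induct)
  case (less i)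
  show ?case
  proof (cases i)
    case 0
    then show ?thesis using pseudo_cosine_0[OF \<rho>] by simp
  next
    case (Suc j)
    have c_term: "c j * (\<rho> (j - 1) + \<rho> j) = 0"
    proof (cases j)
      case 0
      then show ?thesis using c_0 by simp
    next
      case (Suc l)
      then show ?thesis using less \<open>i = Suc j\<close> by simp
    qed
    moreover have "a j = 0" using less.prems \<open>i = Suc j\<close> assms(2) by simp
    ultimately have "b j * (\<rho> (Suc j) + \<rho> j) = 0"
      using pseudo_cosine_minus_valency[of j] less.prems \<open>i = Suc j\<close> assms(1)
      by (simp del: mult_eq_0_iff)
    then show ?thesis
      using b_pos[of j] less \<open>i = Suc j\<close> assms(1) by (simp add: add_eq_0_iff2)
  qed
qed

lemma pseudo_cosine_alternation_breaks:
  assumes "j < D" "a j \<noteq> 0" "c j * (\<rho> (j - 1) + \<rho> j) = 0" "\<rho> j \<noteq> 0"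
  shows "\<rho> (Suc j) + \<rho> j \<noteq> 0"
  using pseudo_cosine_minus_valency[OF assms(1)] assms(2-4) by auto

lemma pseudo_cosine_alternation_not_restored:
  assumes "Suc j < D" "a j \<noteq> 0" "c j * (\<rho> (j - 1) + \<rho> j) = 0" "\<rho> j \<noteq> 0"
  shows "\<rho> (Suc (Suc j)) + \<rho> (Suc j) \<noteq> 0"
proof
  assume restored: "\<rho> (Suc (Suc j)) + \<rho> (Suc j) = 0"
  have "c (Suc j) * (\<rho> (Suc j) + \<rho> j) = - (2 * real (a (Suc j)) * \<rho> (Suc j))"
    using pseudo_cosine_minus_valency[OF assms(1)] restored by (simp add: add.commute)
  then have "\<rho> (Suc j) + \<rho> j = (- 2 * real (a (Suc j)) / c (Suc j)) * \<rho> (Suc j)"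
    using c_pos[of "Suc j"] assms(1) by (simp add: field_simps)
  moreover have "b j * (\<rho> (Suc j) + \<rho> j) = - (2 * real (a j) * \<rho> j)"
    using pseudo_cosine_minus_valency[OF Suc_lessD[OF assms(1)]] assms(3) by linarith
  then have "\<rho> (Suc j) + \<rho> j = (- 2 * real (a j) / b j) * \<rho> j"
    using b_pos[of j] assms(1) by (simp add: field_simps)
  ultimately have "\<rho> (Suc j) + \<rho> j = 0"
    by (rule add_eq_0_if_nonpos_multiples) simp_all
  then show False
    using pseudo_cosine_alternation_breaks[OF Suc_lessD[OF assms(1)] assms(2-4)] by simp
qed

end

lemma auxiliary_parameter_1_first_nonzero_a:
  assumes \<sigma>: "pseudo_cosine D a b c \<theta> \<sigma>" and \<rho>: "pseudo_cosine D a b c (- b 0) \<rho>"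
    and "\<sigma> 1 \<noteq> 1"
    and aux: "\<forall>i. 1 \<le> i \<and> i \<le> D \<longrightarrow> \<sigma> i = \<sigma> (i - 1) \<or> \<rho> i = - \<rho> (i - 1)"
    and m: "m < D" "a m \<noteq> 0" "\<forall>j<m. a j = 0"
  shows "Suc m = D" and "\<forall>i\<le>m. \<rho> i = (-1) ^ i"
    and "\<rho> (Suc m) \<noteq> - \<rho> m" and "\<sigma> (Suc m) = \<sigma> m"
proof -
  have alternating: "\<rho> i = (-1) ^ i" if "i \<le> m" for i
    using pseudo_cosine_alternating[OF \<rho> less_imp_le[OF m(1)] m(3) that] .
  then show "\<forall>i\<le>m. \<rho> i = (-1) ^ i" by blast
  have "m \<noteq> 0" using m(2) a_0 by (cases m) auto
  then have c_term: "c m * (\<rho> (m - 1) + \<rho> m) = 0"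
    using alternating[of m] alternating[of "m - 1"] by (cases m) auto
  have "\<rho> m \<noteq> 0" using alternating by simp
  with c_term show jump: "\<rho> (Suc m) \<noteq> - \<rho> m"
    using pseudo_cosine_alternation_breaks[OF \<rho>] m by force
  with aux show flat: "\<sigma> (Suc m) = \<sigma> m"
    using m by force
  show "Suc m = D"
  proof (rule ccontr)
    assume "Suc m \<noteq> D"
    then have "Suc m < D" using m by simp
    then have "\<sigma> (Suc (Suc m)) = \<sigma> (Suc m) \<or> \<rho> (Suc (Suc m)) = - \<rho> (Suc m)"
      using aux by force
    then show False
      using pseudo_cosine_not_flat[OF \<sigma> \<open>\<sigma> 1 \<noteq> 1\<close>, of "Suc m"] flat \<open>Suc m < D\<close>
        pseudo_cosine_alternation_not_restored[OF \<rho> \<open>Suc m < D\<close> m(2) c_term \<open>\<rho> m \<noteq> 0\<close>]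
      by force
  qed
qed

end

lemma auxiliary_parameter_1_iff:
  "auxiliary_parameter D \<sigma> \<rho> 1 \<longleftrightarrow>
    (\<forall>i. 1 \<le> i \<and> i \<le> D \<longrightarrow> \<sigma> i = \<sigma> (i - 1) \<or> \<rho> i = - \<rho> (i - 1))"
proof -
  have "x * y - u * v = 1 * (u * y - x * v) \<longleftrightarrow> x = u \<or> y = - v" for x y u v :: real
  proof -
    have "x * y - u * v = 1 * (u * y - x * v) \<longleftrightarrow> (x - u) * (y + v) = 0"
      by (simp add: algebra_simps)
    then show ?thesis by (simp add: eq_neg_iff_add_eq_0)
  qed
  then show ?thesis unfolding auxiliary_parameter_def by presburger
qed

lemma first_nonzero_below_diameter:
  assumes "\<not> bipartite_drg D a" "\<not> almost_bipartite_drg D a"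
  obtains m where "m < D" "a m \<noteq> 0" "\<forall>j<m. a j = 0"
proof -
  obtain m where m: "m \<le> D" "a m \<noteq> 0" "\<forall>j<m. a j = 0"
    using assms(1) exists_least_iff[of "\<lambda>i. i \<le> D \<and> a i \<noteq> 0"]
    unfolding bipartite_drg_def by (metis le_trans less_imp_le)
  moreover have "m \<noteq> D"
    using m assms(2) unfolding almost_bipartite_drg_def by blast
  ultimately show thesis using that le_neq_implies_less by blast
qed

theorem lemma8p2:
  fixes V :: "'v set" and E :: "'v \<Rightarrow> 'v \<Rightarrow> bool" and D :: nat
    and a b c :: "nat \<Rightarrow> nat" and \<sigma> \<rho> :: "nat \<Rightarrow> real"
  assumes "distance_regular V E D a b c"
    and "D \<ge> 3"
    and "\<not> bipartite_drg D a" and "\<not> almost_bipartite_drg D a"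
    and "tight_pair D a b c \<sigma> \<rho>"
    and "nontrivial_pc \<sigma>" and "nontrivial_pc \<rho>"
    and "auxiliary_parameter D \<sigma> \<rho> 1"
  shows "((\<forall>i\<le>D - 1. \<rho> i = (-1) ^ i) \<and> \<rho> D \<noteq> (-1) ^ D)
    \<and> \<sigma> (D - 1) = \<sigma> D
    \<and> ((\<forall>i\<le>D - 2. a i = 0) \<and> a (D - 1) \<noteq> 0)"
proof -
  \<comment> \<open>Not needed: \<open>D \<ge> 3\<close>, nontriviality of \<open>\<rho>\<close> (\<open>\<rho> 1 = -1\<close> is forced) and the
    tightness of the pair (that \<open>\<sigma> \<rho>\<close> is again a pseudo cosine sequence).\<close>
  interpret distance_regular_graph V E D a b c
    by unfold_locales (fact assms(1))
  obtain \<theta> \<theta>' where \<sigma>: "pseudo_cosine D a b c \<theta> \<sigma>" and \<rho>': "pseudo_cosine D a b c \<theta>' \<rho>"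
    using assms(5) unfolding tight_pair_def is_pseudo_cosine_def by blast
  have \<sigma>1: "\<sigma> 1 \<noteq> 1" using assms(6) unfolding nontrivial_pc_def .
  have aux: "\<forall>i. 1 \<le> i \<and> i \<le> D \<longrightarrow> \<sigma> i = \<sigma> (i - 1) \<or> \<rho> i = - \<rho> (i - 1)"
    using assms(8) auxiliary_parameter_1_iff by blast
  obtain m where m: "m < D" "a m \<noteq> 0" "\<forall>j<m. a j = 0"
    using first_nonzero_below_diameter assms(3,4) by blast
  have "\<rho> 1 = -1"
    using aux \<sigma>1 pseudo_cosine_0[OF \<sigma>] pseudo_cosine_0[OF \<rho>'] m(1) by force
  then have \<rho>: "pseudo_cosine D a b c (- b 0) \<rho>"
    using \<rho>' pseudo_cosine_eigenvalue[OF \<rho>'] m(1) by simp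
  note first_nonzero = auxiliary_parameter_1_first_nonzero_a[OF \<sigma> \<rho> \<sigma>1 aux m]
  have D: "D = Suc m" using first_nonzero(1) by simp
  have "m \<noteq> 0" using m(2) a_0 by (cases m) auto
  show ?thesis
    using first_nonzero m \<open>m \<noteq> 0\<close> unfolding D by auto
qed

end
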